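(* Let $S$ be a $\tau$-uniform sampling of $[n]$ ($\tau\ge1$) with $c_1$-uniform support ($c_1\ge1$), and let $\mathcal G=\mathrm{supp}(S)$. Then $f(x)=\frac1{|\mathcal G|}\sum_{C\in\mathcal G}f_C(x)$ for all $x$, and $$L\le\frac1{|\mathcal G|}\sum_{C\in\mathcal G}L_C\le L^{\mathcal G}_{\max}\le L_{\max}.$$ The last inequality holds without assuming $\tau$-uniformity.
   Context: $f=\frac1n\sum_{i=1}^nf_i$, $f_i:\mathbb{R}^d\to\mathbb{R}$ smooth; for nonempty $C\subseteq[n]$, $f_C=\frac1{|C|}\sum_{i\in C}f_i$ and $L_C$ is the smoothness constant (Lipschitz constant of $\nabla f_C$); $L_i=L_{\{i\}}$, $L=L_{[n]}$, $L_{\max}=\max_iL_i$. A sampling is a random subset $S$ of $[n]$ with $p_C=\Pr(S=C)$, $p_i=\Pr(i\in S)$, $\mathrm{supp}(S)=\{C:p_C>0\}$; $\tau$-uniform means $p_i$ equal for all $i$ and $|S|=\tau$ a.s.; $c_1$-uniform support means $|\{C\in\mathrm{supp}(S):i\in C\}|=c_1$ for all $i$. $L^{\mathcal G}_{\max}=\max_i\frac1{c_1}\sum_{C\in\mathcal G:\,i\in C}L_C$. *)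

theory Defs
  imports "HOL-Analysis.Analysis" "HOL-Probability.Probability"
begin

definition grad :: "('a::euclidean_space \<Rightarrow> real) \<Rightarrow> 'a \<Rightarrow> 'a" where
  "grad g x = (THE v. (g has_derivative (\<lambda>h. v \<bullet> h)) (at x))"

definition smooth_const :: "('a::euclidean_space \<Rightarrow> real) \<Rightarrow> real" where
  "smooth_const g = Inf {K. lipschitz_on K UNIV (grad g)}"

definition fC :: "(nat \<Rightarrow> 'a \<Rightarrow> real) \<Rightarrow> nat set \<Rightarrow> 'a \<Rightarrow> real" where
  "fC f C x = (1 / real (card C)) * (\<Sum>i\<in>C. f i x)"

definition LC :: "(nat \<Rightarrow> 'a::euclidean_space \<Rightarrow> real) \<Rightarrow> nat set \<Rightarrow> real" where
  "LC f C = smooth_const (fC f C)"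

definition Lmax :: "nat \<Rightarrow> (nat \<Rightarrow> 'a::euclidean_space \<Rightarrow> real) \<Rightarrow> real" where
  "Lmax n f = Max ((\<lambda>i. LC f {i}) ` {1..n})"

definition LmaxG :: "nat \<Rightarrow> (nat \<Rightarrow> 'a::euclidean_space \<Rightarrow> real) \<Rightarrow> nat set set \<Rightarrow> nat \<Rightarrow> real" where
  "LmaxG n f G c1 = Max ((\<lambda>i. (1 / real c1) * (\<Sum>C\<in>{C\<in>G. i \<in> C}. LC f C)) ` {1..n})"

definition is_sampling :: "nat \<Rightarrow> nat set pmf \<Rightarrow> bool" where
  "is_sampling n S \<longleftrightarrow> set_pmf S \<subseteq> Pow {1..n}"

definition tau_uniform :: "nat \<Rightarrow> nat \<Rightarrow> nat set pmf \<Rightarrow> bool" where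
  "tau_uniform n \<tau> S \<longleftrightarrow>
     (\<forall>C\<in>set_pmf S. card C = \<tau>) \<and>
     (\<forall>i\<in>{1..n}. \<forall>j\<in>{1..n}.
        measure_pmf.prob S {C. i \<in> C} = measure_pmf.prob S {C. j \<in> C})"

definition uniform_support :: "nat \<Rightarrow> nat \<Rightarrow> nat set pmf \<Rightarrow> bool" where
  "uniform_support n c1 S \<longleftrightarrow> (\<forall>i\<in>{1..n}. card {C\<in>set_pmf S. i \<in> C} = c1)"

end

theory Submission
  imports Defs
begin

text \<open>
  Only the support \<open>G\<close> matters: it is a finite family of \<open>\<tau>\<close>-subsets of \<open>[n]\<close> covering
  every index exactly \<open>c\<^sub>1\<close> times. Double counting the incidences \<open>i \<in> C \<in> G\<close> gives
  \<open>|G| \<tau> = n c\<^sub>1\<close>, which turns the average of the \<open>f\<^sub>C\<close> into \<open>f\<close>, and bounds the average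
  of the \<open>L\<^sub>C\<close> by the largest per-index average \<open>L\<^sup>G\<^sub>m\<^sub>a\<^sub>x\<close>. Since gradients are linear
  and Lipschitz constants add, the smoothness constant of a nonnegative combination is at most
  the combination of the smoothness constants; applied to \<open>f\<close> as an average of the \<open>f\<^sub>C\<close>
  and to each \<open>f\<^sub>C\<close> as an average of the \<open>f\<^sub>i\<close>, this gives the first and last inequality.
\<close>

lemma linear_functional_eq_inner:
  fixes D :: "'a::euclidean_space \<Rightarrow> real"
  assumes "linear D"
  shows "D h = (\<Sum>b\<in>Basis. D b *\<^sub>R b) \<bullet> h"
proof -
  have "D h = D (\<Sum>b\<in>Basis. (h \<bullet> b) *\<^sub>R b)" by (simp add: euclidean_representation)
  also have "\<dots> = (\<Sum>b\<in>Basis. (h \<bullet> b) * D b)"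
    using assms by (simp add: linear_sum linear_scale)
  also have "\<dots> = (\<Sum>b\<in>Basis. D b *\<^sub>R b) \<bullet> h"
    by (simp add: inner_sum_left mult.commute inner_commute[of h])
  finally show ?thesis .
qed

lemma grad_eqI:
  fixes g :: "'a::euclidean_space \<Rightarrow> real"
  assumes "(g has_derivative (\<lambda>h. v \<bullet> h)) (at x)"
  shows "grad g x = v"
  unfolding grad_def
proof (rule the_equality)
  show "(g has_derivative (\<lambda>h. v \<bullet> h)) (at x)" by (fact assms)
next
  fix w assume "(g has_derivative (\<lambda>h. w \<bullet> h)) (at x)"
  then have "(\<lambda>h. w \<bullet> h) = (\<lambda>h. v \<bullet> h)"
    using assms by (rule has_derivative_unique)
  then have "(w - v) \<bullet> (w - v) = 0"
    by (metis inner_diff_left right_minus_eq)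
  then show "w = v" by simp
qed

lemma has_derivative_grad:
  fixes g :: "'a::euclidean_space \<Rightarrow> real"
  assumes "g differentiable (at x)"
  shows "(g has_derivative (\<lambda>h. grad g x \<bullet> h)) (at x)"
proof -
  obtain D where D: "(g has_derivative D) (at x)"
    using assms differentiable_def by blast
  then have "D = (\<lambda>h. (\<Sum>b\<in>Basis. D b *\<^sub>R b) \<bullet> h)"
    using has_derivative_linear linear_functional_eq_inner by blast
  with D show ?thesis
    by (metis grad_eqI)
qed

lemma grad_weighted_sum:
  fixes g :: "'i \<Rightarrow> 'a::euclidean_space \<Rightarrow> real"
  assumes "\<forall>i\<in>I. g i differentiable (at x)"
  shows "((\<lambda>x. \<Sum>i\<in>I. a i * g i x) has_derivative (\<lambda>h. (\<Sum>i\<in>I. a i *\<^sub>R grad (g i) x) \<bullet> h)) (at x)"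
    and "grad (\<lambda>x. \<Sum>i\<in>I. a i * g i x) x = (\<Sum>i\<in>I. a i *\<^sub>R grad (g i) x)"
proof -
  have "((\<lambda>x. \<Sum>i\<in>I. a i * g i x) has_derivative (\<lambda>h. \<Sum>i\<in>I. a i * (grad (g i) x \<bullet> h))) (at x)"
    using assms by (intro has_derivative_sum has_derivative_mult_right has_derivative_grad) auto
  then show "((\<lambda>x. \<Sum>i\<in>I. a i * g i x) has_derivative (\<lambda>h. (\<Sum>i\<in>I. a i *\<^sub>R grad (g i) x) \<bullet> h)) (at x)"
    by (simp add: inner_sum_left)
  then show "grad (\<lambda>x. \<Sum>i\<in>I. a i * g i x) x = (\<Sum>i\<in>I. a i *\<^sub>R grad (g i) x)"
    by (rule grad_eqI)
qed

definition lipschitz_smooth :: "real \<Rightarrow> ('a::euclidean_space \<Rightarrow> real) \<Rightarrow> bool" where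
  "lipschitz_smooth K g \<longleftrightarrow> (\<forall>x. g differentiable (at x)) \<and> lipschitz_on K UNIV (grad g)"

lemma lipschitz_on_sum:
  fixes g :: "'i \<Rightarrow> 'a::metric_space \<Rightarrow> 'b::real_normed_vector"
  assumes "finite I" and "\<forall>i\<in>I. lipschitz_on (K i) U (g i)"
  shows "lipschitz_on (\<Sum>i\<in>I. K i) U (\<lambda>x. \<Sum>i\<in>I. g i x)"
  using assms by (induction I rule: finite_induct) (auto intro: lipschitz_on_add lipschitz_on_constant)

lemma lipschitz_smooth_weighted_sum:
  fixes g :: "'i \<Rightarrow> 'a::euclidean_space \<Rightarrow> real"
  assumes "finite I" and "\<forall>i\<in>I. a i \<ge> 0" and "\<forall>i\<in>I. lipschitz_smooth (K i) (g i)"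
  shows "lipschitz_smooth (\<Sum>i\<in>I. a i * K i) (\<lambda>x. \<Sum>i\<in>I. a i * g i x)"
proof -
  have diff: "\<forall>i\<in>I. g i differentiable (at x)" for x
    using assms(3) by (auto simp: lipschitz_smooth_def)
  have "lipschitz_on (\<Sum>i\<in>I. a i * K i) UNIV (\<lambda>x. \<Sum>i\<in>I. a i *\<^sub>R grad (g i) x)"
    using assms by (intro lipschitz_on_sum lipschitz_on_cmult_nonneg ballI)
      (auto simp: lipschitz_smooth_def)
  moreover have "(\<lambda>x. \<Sum>i\<in>I. a i * g i x) differentiable (at x)" for x
    using grad_weighted_sum(1)[OF diff] differentiable_def by blast
  ultimately show ?thesis
    unfolding lipschitz_smooth_def grad_weighted_sum(2)[OF diff] by blast
qed

lemma smooth_const_le: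
  "lipschitz_smooth K g \<Longrightarrow> smooth_const g \<le> K"
  unfolding smooth_const_def lipschitz_smooth_def
  by (rule cInf_lower) (auto intro: bdd_belowI[where m=0] simp: lipschitz_on_def)

lemma lipschitz_smooth_smooth_const:
  assumes "lipschitz_smooth K g"
  shows "lipschitz_smooth (smooth_const g) g"
proof -
  let ?A = "{K. lipschitz_on K UNIV (grad g)}"
  have ne: "?A \<noteq> {}" using assms lipschitz_smooth_def by blast
  have "dist (grad g x) (grad g y) \<le> smooth_const g * dist x y" for x y
  proof (cases "x = y")
    case False
    then have "dist x y > 0" by simp
    moreover have "dist (grad g x) (grad g y) / dist x y \<le> smooth_const g"
      unfolding smooth_const_def using ne \<open>dist x y > 0\<close>
      by (intro cInf_greatest) (auto simp: lipschitz_on_def pos_divide_le_eq)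
    ultimately show ?thesis by (simp add: pos_divide_le_eq)
  qed simp
  moreover have "0 \<le> smooth_const g" unfolding smooth_const_def
    using ne by (intro cInf_greatest) (auto simp: lipschitz_on_def)
  ultimately show ?thesis
    using assms unfolding lipschitz_smooth_def lipschitz_on_def by auto
qed

lemma smooth_const_weighted_sum_le:
  fixes g :: "'i \<Rightarrow> 'a::euclidean_space \<Rightarrow> real"
  assumes "finite I" and "\<forall>i\<in>I. a i \<ge> 0" and "\<forall>i\<in>I. \<exists>K. lipschitz_smooth K (g i)"
  shows "smooth_const (\<lambda>x. \<Sum>i\<in>I. a i * g i x) \<le> (\<Sum>i\<in>I. a i * smooth_const (g i))"
  using assms lipschitz_smooth_smooth_const
  by (intro smooth_const_le lipschitz_smooth_weighted_sum) auto

lemma fC_weighted_sum: "fC f C = (\<lambda>x. \<Sum>j\<in>C. (1 / real (card C)) * f j x)"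
  by (rule ext) (simp add: fC_def sum_distrib_left)

lemma fC_singleton: "fC f {j} = f j"
  by (rule ext) (simp add: fC_def)

lemma lipschitz_smooth_fC:
  assumes "finite C" and "\<forall>j\<in>C. \<exists>K. lipschitz_smooth K (f j)"
  shows "\<exists>K. lipschitz_smooth K (fC f C)"
proof -
  obtain K where K: "\<forall>j\<in>C. lipschitz_smooth (K j) (f j)"
    using assms(2) by metis
  have "lipschitz_smooth (\<Sum>j\<in>C. 1 / real (card C) * K j) (fC f C)"
    unfolding fC_weighted_sum using assms(1) K by (intro lipschitz_smooth_weighted_sum) auto
  then show ?thesis ..
qed

lemma LC_le_average_singletons:
  assumes "finite C" and "\<forall>j\<in>C. \<exists>K. lipschitz_smooth K (f j)"
  shows "LC f C \<le> (\<Sum>j\<in>C. (1 / real (card C)) * LC f {j})"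
  unfolding LC_def fC_singleton unfolding fC_weighted_sum
  using assms by (intro smooth_const_weighted_sum_le) auto

text \<open>The support of a \<open>\<tau>\<close>-uniform sampling with \<open>c\<^sub>1\<close>-uniform support.\<close>

definition regular_cover :: "nat \<Rightarrow> nat \<Rightarrow> nat \<Rightarrow> nat set set \<Rightarrow> bool" where
  "regular_cover n \<tau> c1 G \<longleftrightarrow> finite G \<and> (\<forall>C\<in>G. C \<subseteq> {1..n} \<and> card C = \<tau>)
     \<and> (\<forall>i\<in>{1..n}. card {C\<in>G. i \<in> C} = c1)"

lemma finite_set_pmf_sampling:
  "is_sampling n S \<Longrightarrow> finite (set_pmf S)"
  unfolding is_sampling_def by (meson finite_Pow_iff finite_atLeastAtMost finite_subset)

lemma regular_cover_set_pmf:
  assumes "is_sampling n S" and "tau_uniform n \<tau> S" and "uniform_support n c1 S"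
  shows "regular_cover n \<tau> c1 (set_pmf S)"
  using assms finite_set_pmf_sampling
  unfolding regular_cover_def is_sampling_def tau_uniform_def uniform_support_def by blast

lemma sum_members_swap:
  assumes "finite G" and "\<forall>C\<in>G. C \<subseteq> {1..n::nat}"
  shows "(\<Sum>C\<in>G. \<Sum>i\<in>C. h i C) = (\<Sum>i\<in>{1..n}. \<Sum>C\<in>{C\<in>G. i \<in> C}. h i C)"
proof -
  have "(\<Sum>C\<in>G. \<Sum>i\<in>C. h i C) = (\<Sum>C\<in>G. \<Sum>i\<in>{i\<in>{1..n}. i \<in> C}. h i C)"
    using assms(2) by (intro sum.cong refl) force
  also have "\<dots> = (\<Sum>i\<in>{1..n}. \<Sum>C\<in>{C\<in>G. i \<in> C}. h i C)"
    using assms(1) by (intro sum.swap_restrict) auto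
  finally show ?thesis .
qed

lemma card_regular_cover:
  assumes "regular_cover n \<tau> c1 G"
  shows "card G * \<tau> = n * c1"
proof -
  have "card G * \<tau> = (\<Sum>C\<in>G. \<Sum>i\<in>C. 1)"
    using assms by (simp add: regular_cover_def)
  also have "\<dots> = (\<Sum>i\<in>{1..n}. \<Sum>C\<in>{C\<in>G. i \<in> C}. 1)"
    using assms by (intro sum_members_swap) (auto simp: regular_cover_def)
  also have "\<dots> = n * c1"
    using assms by (simp add: regular_cover_def)
  finally show ?thesis .
qed

lemma sum_fC_regular_cover:
  assumes "regular_cover n \<tau> c1 G"
  shows "(\<Sum>C\<in>G. fC f C x) = real c1 / real \<tau> * (\<Sum>i\<in>{1..n}. f i x)"
proof -
  have "(\<Sum>C\<in>G. fC f C x) = (\<Sum>C\<in>G. \<Sum>i\<in>C. f i x / real \<tau>)"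
    using assms by (intro sum.cong refl) (simp add: regular_cover_def fC_def sum_divide_distrib)
  also have "\<dots> = (\<Sum>i\<in>{1..n}. \<Sum>C\<in>{C\<in>G. i \<in> C}. f i x / real \<tau>)"
    using assms by (intro sum_members_swap) (auto simp: regular_cover_def)
  also have "\<dots> = real c1 / real \<tau> * (\<Sum>i\<in>{1..n}. f i x)"
    using assms by (simp add: regular_cover_def sum_distrib_left)
  finally show ?thesis .
qed

lemma fC_eq_average_regular_cover:
  assumes cover: "regular_cover n \<tau> c1 G" and "\<tau> \<ge> 1" and "c1 \<ge> 1"
  shows "fC f {1..n} x = 1 / real (card G) * (\<Sum>C\<in>G. fC f C x)"
proof (cases "n = 0")
  case True
  then have "G = {}"
    using card_regular_cover[OF cover] cover \<open>\<tau> \<ge> 1\<close> by (simp add: regular_cover_def)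
  with True show ?thesis by (simp add: fC_def)
next
  case False
  have "real (card G) * real \<tau> = real n * real c1"
    using card_regular_cover[OF cover] by (metis of_nat_mult)
  with False assms(2,3) show ?thesis
    unfolding sum_fC_regular_cover[OF cover] by (simp add: fC_def field_simps)
qed

lemma LC_le_average_regular_cover:
  assumes smooth: "\<forall>i\<in>{1..n}. \<exists>K. lipschitz_smooth K (f i)"
    and cover: "regular_cover n \<tau> c1 G" and "\<tau> \<ge> 1" and "c1 \<ge> 1"
  shows "LC f {1..n} \<le> 1 / real (card G) * (\<Sum>C\<in>G. LC f C)"
proof -
  have members: "finite G" "\<forall>C\<in>G. C \<subseteq> {1..n}"
    using cover by (auto simp: regular_cover_def)
  have average: "fC f {1..n} = (\<lambda>x. \<Sum>C\<in>G. 1 / real (card G) * fC f C x)"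
    by (rule ext) (simp only: fC_eq_average_regular_cover[OF assms(2-4)] sum_distrib_left)
  have "LC f {1..n} \<le> (\<Sum>C\<in>G. 1 / real (card G) * LC f C)"
    unfolding LC_def average using members smooth
    by (intro smooth_const_weighted_sum_le ballI lipschitz_smooth_fC)
      (auto intro: finite_subset)
  then show ?thesis by (simp add: sum_distrib_left)
qed

lemma average_LC_le_LmaxG:
  assumes cover: "regular_cover n \<tau> c1 G" and "G \<noteq> {}" and "\<tau> \<ge> 1" and "c1 \<ge> 1"
  shows "1 / real (card G) * (\<Sum>C\<in>G. LC f C) \<le> LmaxG n f G c1"
proof -
  let ?M = "LmaxG n f G c1"
  have members: "finite G" "\<forall>C\<in>G. C \<subseteq> {1..n} \<and> card C = \<tau>"
    "\<forall>i\<in>{1..n}. card {C\<in>G. i \<in> C} = c1"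
    using cover by (auto simp: regular_cover_def)
  have le_M: "1 / real c1 * (\<Sum>C\<in>{C\<in>G. i \<in> C}. LC f C) \<le> ?M" if "i \<in> {1..n}" for i
    unfolding LmaxG_def using that by (intro Max_ge) auto
  have "(\<Sum>C\<in>G. LC f C) = (\<Sum>C\<in>G. \<Sum>i\<in>C. LC f C / real \<tau>)"
    using members(2) \<open>\<tau> \<ge> 1\<close> by (intro sum.cong refl) simp
  also have "\<dots> = (\<Sum>i\<in>{1..n}. \<Sum>C\<in>{C\<in>G. i \<in> C}. LC f C / real \<tau>)"
    using members by (intro sum_members_swap) auto
  also have "\<dots> = (\<Sum>i\<in>{1..n}. real c1 / real \<tau> * (1 / real c1 * (\<Sum>C\<in>{C\<in>G. i \<in> C}. LC f C)))"
    using \<open>c1 \<ge> 1\<close> by (intro sum.cong refl) (simp add: sum_divide_distrib[symmetric])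
  also have "\<dots> \<le> (\<Sum>i\<in>{1..n}. real c1 / real \<tau> * ?M)"
    using le_M by (intro sum_mono mult_left_mono) auto
  also have "\<dots> = real (card G) * ?M"
    using card_regular_cover[OF cover] \<open>\<tau> \<ge> 1\<close>
    by (simp add: field_simps flip: of_nat_mult)
  finally have "(\<Sum>C\<in>G. LC f C) \<le> real (card G) * ?M" .
  moreover have "card G > 0"
    using members(1) \<open>G \<noteq> {}\<close> by (simp add: card_gt_0_iff)
  ultimately show ?thesis by (simp add: divide_le_eq mult.commute)
qed

lemma LC_le_Lmax:
  assumes smooth: "\<forall>i\<in>{1..n}. \<exists>K. lipschitz_smooth K (f i)"
    and "C \<subseteq> {1..n}" and "C \<noteq> {}"
  shows "LC f C \<le> Lmax n f"
proof -
  have "finite C" using assms(2) finite_subset by blast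
  have "LC f C \<le> (\<Sum>j\<in>C. 1 / real (card C) * LC f {j})"
    using \<open>finite C\<close> assms(2) smooth by (intro LC_le_average_singletons) auto
  also have "\<dots> \<le> (\<Sum>j\<in>C. 1 / real (card C) * Lmax n f)"
    unfolding Lmax_def using assms(2) by (intro sum_mono mult_left_mono Max_ge) auto
  also have "\<dots> = Lmax n f"
    using \<open>finite C\<close> \<open>C \<noteq> {}\<close> by simp
  finally show ?thesis .
qed

text \<open>For \<open>n = 0\<close> both sides are the same junk value \<open>Max {}\<close>.\<close>

lemma LmaxG_le_Lmax:
  assumes smooth: "\<forall>i\<in>{1..n}. \<exists>K. lipschitz_smooth K (f i)"
    and members: "\<forall>C\<in>G. C \<subseteq> {1..n}" and count: "\<forall>i\<in>{1..n}. card {C\<in>G. i \<in> C} = c1"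
    and "c1 \<ge> 1"
  shows "LmaxG n f G c1 \<le> Lmax n f"
proof (cases "n = 0")
  case False
  show ?thesis unfolding LmaxG_def
  proof (rule Max.boundedI)
    fix a assume "a \<in> (\<lambda>i. 1 / real c1 * (\<Sum>C\<in>{C\<in>G. i \<in> C}. LC f C)) ` {1..n}"
    then obtain i where i: "i \<in> {1..n}" and a: "a = 1 / real c1 * (\<Sum>C\<in>{C\<in>G. i \<in> C}. LC f C)"
      by blast
    have "(\<Sum>C\<in>{C\<in>G. i \<in> C}. LC f C) \<le> (\<Sum>C\<in>{C\<in>G. i \<in> C}. Lmax n f)"
      using members smooth by (intro sum_mono LC_le_Lmax) auto
    also have "\<dots> = real c1 * Lmax n f"
      using count i by simp
    finally show "a \<le> Lmax n f"
      unfolding a using \<open>c1 \<ge> 1\<close> by (simp add: divide_le_eq mult.commute)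
  qed (use False in auto)
qed (simp add: LmaxG_def Lmax_def)

theorem theorem4p17:
  fixes f :: "nat \<Rightarrow> 'a::euclidean_space \<Rightarrow> real"
    and n \<tau> c1 :: nat and S :: "nat set pmf"
  assumes smooth: "\<forall>i\<in>{1..n}. (\<forall>x. f i differentiable (at x)) \<and>
                      (\<exists>K. lipschitz_on K UNIV (grad (f i)))"
    and samp: "is_sampling n S"
    and tau: "\<tau> \<ge> 1" and tauu: "tau_uniform n \<tau> S"
    and c1: "c1 \<ge> 1" and c1u: "uniform_support n c1 S"
  shows "(\<forall>x. fC f {1..n} x = (1 / real (card (set_pmf S))) * (\<Sum>C\<in>set_pmf S. fC f C x))
       \<and> LC f {1..n} \<le> (1 / real (card (set_pmf S))) * (\<Sum>C\<in>set_pmf S. LC f C)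
       \<and> (1 / real (card (set_pmf S))) * (\<Sum>C\<in>set_pmf S. LC f C) \<le> LmaxG n f (set_pmf S) c1
       \<and> LmaxG n f (set_pmf S) c1 \<le> Lmax n f
       \<and> (\<forall>S' c1'. is_sampling n S' \<and> c1' \<ge> 1 \<and> uniform_support n c1' S'
              \<longrightarrow> LmaxG n f (set_pmf S') c1' \<le> Lmax n f)"
proof -
  have smooth': "\<forall>i\<in>{1..n}. \<exists>K. lipschitz_smooth K (f i)"
    using smooth by (simp add: lipschitz_smooth_def)
  have cover: "regular_cover n \<tau> c1 (set_pmf S)"
    using samp tauu c1u by (rule regular_cover_set_pmf)
  have sampling_bound: "LmaxG n f (set_pmf S') c1' \<le> Lmax n f"
    if "is_sampling n S'" "c1' \<ge> 1" "uniform_support n c1' S'" for S' c1'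
    using that smooth' by (intro LmaxG_le_Lmax) (auto simp: is_sampling_def uniform_support_def)
  show ?thesis
  proof (intro conjI allI impI)
    show "fC f {1..n} x = 1 / real (card (set_pmf S)) * (\<Sum>C\<in>set_pmf S. fC f C x)" for x
      using cover tau c1 by (rule fC_eq_average_regular_cover)
    show "LC f {1..n} \<le> 1 / real (card (set_pmf S)) * (\<Sum>C\<in>set_pmf S. LC f C)"
      using smooth' cover tau c1 by (rule LC_le_average_regular_cover)
    show "1 / real (card (set_pmf S)) * (\<Sum>C\<in>set_pmf S. LC f C) \<le> LmaxG n f (set_pmf S) c1"
      using cover set_pmf_not_empty tau c1 by (rule average_LC_le_LmaxG)
    show "LmaxG n f (set_pmf S) c1 \<le> Lmax n f"
      using samp c1 c1u by (rule sampling_bound)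
    show "LmaxG n f (set_pmf S') c1' \<le> Lmax n f"
      if "is_sampling n S' \<and> c1' \<ge> 1 \<and> uniform_support n c1' S'" for S' c1'
      using that by (intro sampling_bound) auto
  qed
qed

end
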